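(* Consider a single advertiser in a single-slot hybrid auction, with per-click value $v>0$. The advertiser's belief about its click-through rate is a random variable $\mathcal{P}$ on $[0,1]$ equal to the auctioneer's prior, with mean $p=\mathbb{E}[\mathcal{P}]>0$, and the auctioneer's index equals $q=p$. The advertiser submits a bid $(m,c)$ (per-impression and per-click), and has effective bid $\max(m,cq)$; if $R$ denotes the highest competing effective bid, the advertiser obtains the impression iff its effective bid exceeds $R$, paying $R$ per impression if $m>cq$ and $R/q$ per click otherwise. The advertiser has a utility function $U:\mathbb{R}\to\mathbb{R}$ that is monotone increasing with monotone derivative and $U(0)=0$, and, writing $I_R$ for the indicator that it obtains the impression, it evaluates a bid by $I_R\cdot \mathbb{E}[U(v\mathcal{P}-R)]$ if it is charged per impression and $I_R\cdot\mathbb{E}[U(v\mathcal{P}-R\mathcal{P}/p)]$ if it is charged per click (so that it seeks to maximize $I_R\cdot\max(\mathbb{E}[U(v\mathcal{P}-R)],\mathbb{E}[U(v\mathcal{P}-R\mathcal{P}/p)])$). Then: if $U$ is concave, bidding $(0,v)$ is a dominant strategy; if $U$ is convex, there is a dominant strategy of the form $(m,0)$ for a suitably chosen $m$.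
   Context: A strategy is dominant if for every value of the highest competing effective bid $R$ it achieves the maximum possible value of the advertiser's objective. *)

theory Defs
  imports "HOL-Probability.Probability"
begin

definition hybrid_obj ::
  "'a measure \<Rightarrow> ('a \<Rightarrow> real) \<Rightarrow> (real \<Rightarrow> real) \<Rightarrow> real \<Rightarrow> real \<times> real \<Rightarrow> real \<Rightarrow> real" where
  "hybrid_obj M P U v b R =
     (let p = (\<integral>x. P x \<partial>M); q = p; m = fst b; c = snd b in
      if max m (c * q) > R then
        (if m > c * q then (\<integral>x. U (v * P x - R) \<partial>M)
         else (\<integral>x. U (v * P x - R * P x / p) \<partial>M))
      else 0)"

definition dominant ::
  "'a measure \<Rightarrow> ('a \<Rightarrow> real) \<Rightarrow> (real \<Rightarrow> real) \<Rightarrow> real \<Rightarrow> real \<times> real \<Rightarrow> bool" where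
  "dominant M P U v b \<longleftrightarrow>
     (\<forall>R \<ge> 0. \<forall>b'. fst b' \<ge> 0 \<and> snd b' \<ge> 0 \<longrightarrow>
        hybrid_obj M P U v b' R \<le> hybrid_obj M P U v b R)"

end

theory Submission
  imports Defs
begin

text \<open>Whatever the competing bid R, the two ways of being charged give random payoffs with the
same mean v p - R: per impression the payoff is v P - R, per click it is (v - R/p) P, a
contraction of v P - R towards its mean. Hence a concave utility prefers the per-click charge
(and by Jensen it is worth nothing once R \<ge> v p), which is exactly what the bid (0, v)
obtains. A convex utility prefers the per-impression charge; its expected value decreases
continuously in R, so a per-impression bid m at its sign change wins exactly when that value
is nonnegative.\<close>

lemma (in prob_space) jensens_inequality_UNIV:
  fixes g :: "real \<Rightarrow> real"
  assumes "integrable M Y" "convex_on UNIV g" "integrable M (\<lambda>x. g (Y x))"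
  shows "g (expectation Y) \<le> expectation (\<lambda>x. g (Y x))"
  using jensens_inequality[of Y UNIV 0 0 g] assms by auto

lemma (in prob_space) convex_expectation_dilation_mono:
  fixes g :: "real \<Rightarrow> real" and Y :: "'a \<Rightarrow> real"
  defines "e \<equiv> expectation Y"
  assumes Y: "integrable M Y" and g: "convex_on UNIV g" and ab: "0 \<le> a" "a \<le> b"
    and ia: "integrable M (\<lambda>x. g (\<mu> + a * (Y x - e)))"
    and ib: "integrable M (\<lambda>x. g (\<mu> + b * (Y x - e)))"
  shows "expectation (\<lambda>x. g (\<mu> + a * (Y x - e))) \<le> expectation (\<lambda>x. g (\<mu> + b * (Y x - e)))"
proof (cases "b = 0")
  case True
  with ab show ?thesis by simp
next
  case False
  define t where "t = a / b"
  have t: "0 \<le> t" "t \<le> 1"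
    using ab False by (auto simp: t_def)
  have pointwise: "g (\<mu> + a * (Y x - e)) \<le> (1 - t) * g \<mu> + t * g (\<mu> + b * (Y x - e))" for x
  proof -
    have "\<mu> + a * (Y x - e) = (1 - t) *\<^sub>R \<mu> + t *\<^sub>R (\<mu> + b * (Y x - e))"
      using False by (simp add: t_def algebra_simps)
    then show ?thesis
      using convex_onD[OF g t] by simp
  qed
  have "g \<mu> \<le> expectation (\<lambda>x. g (\<mu> + b * (Y x - e)))"
  proof -
    have "expectation (\<lambda>x. \<mu> + b * (Y x - e)) = \<mu>"
      using Y by (simp add: prob_space e_def algebra_simps)
    then show ?thesis
      using jensens_inequality_UNIV[of "\<lambda>x. \<mu> + b * (Y x - e)", OF _ g ib] Y by simp
  qed
  then have "(1 - t) * g \<mu> \<le> (1 - t) * expectation (\<lambda>x. g (\<mu> + b * (Y x - e)))"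
    using t by (intro mult_left_mono) auto
  then have "(1 - t) * g \<mu> + t * expectation (\<lambda>x. g (\<mu> + b * (Y x - e)))
      \<le> expectation (\<lambda>x. g (\<mu> + b * (Y x - e)))"
    by (simp add: algebra_simps)
  moreover have "expectation (\<lambda>x. g (\<mu> + a * (Y x - e)))
      \<le> (1 - t) * g \<mu> + t * expectation (\<lambda>x. g (\<mu> + b * (Y x - e)))"
  proof -
    have "expectation (\<lambda>x. g (\<mu> + a * (Y x - e)))
        \<le> expectation (\<lambda>x. (1 - t) * g \<mu> + t * g (\<mu> + b * (Y x - e)))"
      using ia ib pointwise by (intro integral_mono) auto
    also have "\<dots> = (1 - t) * g \<mu> + t * expectation (\<lambda>x. g (\<mu> + b * (Y x - e)))"
      using ib by (simp add: prob_space)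
    finally show ?thesis .
  qed
  ultimately show ?thesis
    by linarith
qed

lemma (in prob_space) integrable_mono_comp_bounded:
  fixes f :: "real \<Rightarrow> real"
  assumes "mono f" "X \<in> borel_measurable M" "\<And>x. x \<in> space M \<Longrightarrow> \<bar>X x\<bar> \<le> B"
  shows "integrable M (\<lambda>x. f (X x))"
proof (rule integrable_const_bound[of _ "\<bar>f (- B)\<bar> + \<bar>f B\<bar>"])
  show "AE x in M. norm (f (X x)) \<le> \<bar>f (- B)\<bar> + \<bar>f B\<bar>"
  proof (rule AE_I2)
    fix x assume "x \<in> space M"
    then have "- B \<le> X x" "X x \<le> B"
      using assms(3) by (force simp: abs_le_iff)+
    then have "f (- B) \<le> f (X x)" "f (X x) \<le> f B"
      using monoD[OF assms(1)] by auto
    then show "norm (f (X x)) \<le> \<bar>f (- B)\<bar> + \<bar>f B\<bar>"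
      by auto
  qed
  show "(\<lambda>x. f (X x)) \<in> borel_measurable M"
    by (rule measurable_compose[OF assms(2) borel_measurable_mono[OF assms(1)]])
qed

locale hybrid_auction = prob_space M for M :: "'a measure" +
  fixes P :: "'a \<Rightarrow> real" and U :: "real \<Rightarrow> real" and v :: real
  assumes P_measurable: "P \<in> borel_measurable M"
    and P_range: "\<And>x. x \<in> space M \<Longrightarrow> 0 \<le> P x \<and> P x \<le> 1"
    and mean_pos: "expectation P > 0"
    and v_pos: "v > 0"
    and U_mono: "mono U"
    and U_zero: "U 0 = 0"
begin

abbreviation p :: real where "p \<equiv> expectation P"

definition impression_value :: "real \<Rightarrow> real" where
  "impression_value R = expectation (\<lambda>x. U (v * P x - R))"

definition click_value :: "real \<Rightarrow> real" where
  "click_value R = expectation (\<lambda>x. U (v * P x - R * P x / p))"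

lemma integrable_P: "integrable M P"
  using P_range P_measurable by (intro integrable_const_bound[of _ 1]) auto

lemma integrable_U_affine: "integrable M (\<lambda>x. U (c * P x + d))"
proof (rule integrable_mono_comp_bounded[OF U_mono, of _ "\<bar>c\<bar> + \<bar>d\<bar>"])
  show "(\<lambda>x. c * P x + d) \<in> borel_measurable M"
    using P_measurable by measurable
  fix x assume "x \<in> space M"
  then have "\<bar>c * P x\<bar> \<le> \<bar>c\<bar>"
    using P_range by (simp add: abs_mult mult_left_le)
  then show "\<bar>c * P x + d\<bar> \<le> \<bar>c\<bar> + \<bar>d\<bar>"
    by linarith
qed

lemma click_payoff_eq: "v * P x - R * P x / p = (v - R / p) * P x"
  by (simp add: algebra_simps)

lemma integrable_impression: "integrable M (\<lambda>x. U (v * P x - R))"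
  using integrable_U_affine[of v "- R"] by simp

lemma integrable_click: "integrable M (\<lambda>x. U (v * P x - R * P x / p))"
  using integrable_U_affine[of "v - R / p" 0] unfolding click_payoff_eq by simp

lemma hybrid_obj_cases: "hybrid_obj M P U v b R \<in> {0, impression_value R, click_value R}"
  unfolding hybrid_obj_def Let_def impression_value_def click_value_def by auto

lemma hybrid_obj_per_click_bid:
  "hybrid_obj M P U v (0, v) R = (if R < v * p then click_value R else 0)"
  using mult_pos_pos[OF v_pos mean_pos] unfolding hybrid_obj_def Let_def click_value_def by auto

lemma hybrid_obj_per_impression_bid:
  assumes "0 \<le> m" "0 \<le> R"
  shows "hybrid_obj M P U v (m, 0) R = (if R < m then impression_value R else 0)"
  using assms unfolding hybrid_obj_def Let_def impression_value_def by auto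

lemma click_value_nonneg:
  assumes "R \<le> v * p"
  shows "0 \<le> click_value R"
  unfolding click_value_def
proof (intro integral_nonneg_AE AE_I2)
  fix x assume "x \<in> space M"
  moreover have "0 \<le> v - R / p"
    using assms mean_pos by (simp add: field_simps)
  ultimately have "0 \<le> (v - R / p) * P x"
    using P_range by simp
  then show "0 \<le> U (v * P x - R * P x / p)"
    unfolding click_payoff_eq using U_mono U_zero by (metis monoD)
qed

lemma click_value_nonpos:
  assumes "v * p \<le> R"
  shows "click_value R \<le> 0"
proof -
  have "U (v * P x - R * P x / p) \<le> 0" if "x \<in> space M" for x
  proof -
    have "v - R / p \<le> 0"
      using assms mean_pos by (simp add: field_simps)
    then have "(v - R / p) * P x \<le> 0"
      using P_range that by (simp add: mult_nonpos_nonneg)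
    then show ?thesis
      unfolding click_payoff_eq using U_mono U_zero by (metis monoD)
  qed
  then have "click_value R \<le> expectation (\<lambda>x. 0)"
    unfolding click_value_def by (intro integral_mono integrable_click) auto
  then show ?thesis
    by simp
qed

lemma impression_value_antimono: "antimono impression_value"
  unfolding impression_value_def
  by (intro antimonoI integral_mono integrable_impression) (auto intro!: monoD[OF U_mono])

lemma impression_value_at_v_nonpos: "impression_value v \<le> 0"
proof -
  have "U (v * P x - v) \<le> 0" if "x \<in> space M" for x
  proof -
    have "v * P x - v \<le> 0"
      using P_range that v_pos by (simp add: mult_le_cancel_left1)
    then show ?thesis
      using U_mono U_zero by (metis monoD)
  qed
  then have "impression_value v \<le> expectation (\<lambda>x. 0)"
    unfolding impression_value_def by (intro integral_mono integrable_impression) auto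
  then show ?thesis
    by simp
qed

lemma convex_click_le_impression:
  fixes g :: "real \<Rightarrow> real"
  assumes g: "convex_on UNIV g"
    and "integrable M (\<lambda>x. g (v * P x - R * P x / p))" "integrable M (\<lambda>x. g (v * P x - R))"
    and R: "0 \<le> R" "R \<le> v * p"
  shows "expectation (\<lambda>x. g (v * P x - R * P x / p)) \<le> expectation (\<lambda>x. g (v * P x - R))"
proof -
  have click: "v * p - R + (v - R / p) * (P x - p) = v * P x - R * P x / p" for x
    using mean_pos by (simp add: field_simps)
  have impression: "v * p - R + v * (P x - p) = v * P x - R" for x
    by (simp add: field_simps)
  have "0 \<le> v - R / p" "v - R / p \<le> v"
    using R mean_pos by (auto simp: field_simps)
  then show ?thesis
    using convex_expectation_dilation_mono[OF integrable_P g, of "v - R / p" v "v * p - R"] assms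
    unfolding click impression by simp
qed

lemma concave_impression_le_click:
  assumes "concave_on UNIV U" "0 \<le> R" "R \<le> v * p"
  shows "impression_value R \<le> click_value R"
proof -
  have "convex_on UNIV (\<lambda>y. - U y)"
    using assms(1) by (simp add: concave_on_def)
  from convex_click_le_impression[OF this _ _ assms(2,3)]
  show ?thesis
    using integrable_click integrable_impression
    unfolding impression_value_def click_value_def by simp
qed

lemma concave_impression_value_nonpos:
  assumes "concave_on UNIV U" "v * p \<le> R"
  shows "impression_value R \<le> 0"
proof -
  have "convex_on UNIV (\<lambda>y. - U y)"
    using assms(1) by (simp add: concave_on_def)
  then have "- U (expectation (\<lambda>x. v * P x - R)) \<le> expectation (\<lambda>x. - U (v * P x - R))"
    using integrable_P integrable_impression by (intro jensens_inequality_UNIV) auto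
  moreover have "expectation (\<lambda>x. v * P x - R) = v * p - R"
    using integrable_P by (simp add: prob_space)
  moreover have "U (v * p - R) \<le> U 0"
    using assms(2) U_mono by (simp add: monoD)
  ultimately show ?thesis
    unfolding impression_value_def using U_zero by simp
qed

lemma convex_click_le_impression_or_zero:
  assumes "convex_on UNIV U" "0 \<le> R"
  shows "click_value R \<le> max 0 (impression_value R)"
proof (cases "R \<le> v * p")
  case True
  then show ?thesis
    using convex_click_le_impression[OF assms(1) integrable_click integrable_impression assms(2)]
    unfolding click_value_def impression_value_def by simp
next
  case False
  then show ?thesis
    using click_value_nonpos[of R] by simp
qed

lemma convex_impression_value:
  assumes U: "convex_on UNIV U"
  shows "convex_on UNIV impression_value"
proof (rule convex_onI)
  fix t x y :: real
  assume t: "0 < t" "t < 1"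
  have "impression_value ((1 - t) *\<^sub>R x + t *\<^sub>R y)
      \<le> expectation (\<lambda>z. (1 - t) * U (v * P z - x) + t * U (v * P z - y))"
    unfolding impression_value_def
  proof (intro integral_mono integrable_impression)
    show "integrable M (\<lambda>z. (1 - t) * U (v * P z - x) + t * U (v * P z - y))"
      using integrable_impression by auto
    fix z
    have "v * P z - ((1 - t) *\<^sub>R x + t *\<^sub>R y) = (1 - t) *\<^sub>R (v * P z - x) + t *\<^sub>R (v * P z - y)"
      by (simp add: algebra_simps)
    then show "U (v * P z - ((1 - t) *\<^sub>R x + t *\<^sub>R y)) \<le> (1 - t) * U (v * P z - x) + t * U (v * P z - y)"
      using convex_onD[OF U, of t] t by simp
  qed
  also have "\<dots> = (1 - t) * impression_value x + t * impression_value y"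
    unfolding impression_value_def using integrable_impression by simp
  finally show "impression_value ((1 - t) *\<^sub>R x + t *\<^sub>R y)
      \<le> (1 - t) * impression_value x + t * impression_value y" .
qed simp

lemma convex_impression_value_sign_change:
  assumes "convex_on UNIV U"
  obtains m where "0 \<le> m" "\<And>R. 0 \<le> R \<Longrightarrow> R < m \<Longrightarrow> 0 \<le> impression_value R"
    "\<And>R. m \<le> R \<Longrightarrow> impression_value R \<le> 0"
proof (cases "impression_value 0 \<le> 0")
  case True
  have "impression_value R \<le> 0" if "0 \<le> R" for R
    using True antimonoD[OF impression_value_antimono that] by simp
  then show ?thesis
    using that[of 0] by simp
next
  case False
  have "continuous_on {0..v} impression_value"
    using convex_on_continuous[OF open_UNIV convex_impression_value[OF assms]]
    by (rule continuous_on_subset) simp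
  then obtain m where m: "0 \<le> m" "impression_value m = 0"
    using IVT2'[of impression_value v 0 0] impression_value_at_v_nonpos False v_pos by auto
  show ?thesis
  proof (rule that[OF m(1)])
    fix R assume "R < m"
    then show "0 \<le> impression_value R"
      using antimonoD[OF impression_value_antimono, of R m] m(2) by simp
  next
    fix R assume "m \<le> R"
    then show "impression_value R \<le> 0"
      using antimonoD[OF impression_value_antimono, of m R] m(2) by simp
  qed
qed

theorem dominant_per_click_bid:
  assumes "concave_on UNIV U"
  shows "dominant M P U v (0, v)"
  unfolding dominant_def
proof (intro allI impI)
  fix R :: real and b :: "real \<times> real"
  assume "0 \<le> R"
  then show "hybrid_obj M P U v b R \<le> hybrid_obj M P U v (0, v) R"
    using hybrid_obj_cases[of b R] hybrid_obj_per_click_bid[of R]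
      concave_impression_le_click[OF assms] concave_impression_value_nonpos[OF assms]
      click_value_nonneg[of R] click_value_nonpos[of R]
    by (cases "R < v * p") auto
qed

theorem dominant_per_impression_bid:
  assumes "convex_on UNIV U"
  shows "\<exists>m \<ge> 0. dominant M P U v (m, 0)"
proof -
  obtain m where m: "0 \<le> m" "\<And>R. 0 \<le> R \<Longrightarrow> R < m \<Longrightarrow> 0 \<le> impression_value R"
    "\<And>R. m \<le> R \<Longrightarrow> impression_value R \<le> 0"
    using convex_impression_value_sign_change[OF assms] by blast
  have "hybrid_obj M P U v b R \<le> hybrid_obj M P U v (m, 0) R" if "0 \<le> R" for b R
    using hybrid_obj_cases[of b R] hybrid_obj_per_impression_bid[OF m(1) that]
      convex_click_le_impression_or_zero[OF assms that] m(2)[OF that] m(3)[of R]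
    by (cases "R < m") auto
  then show ?thesis
    using m(1) unfolding dominant_def by blast
qed

end

theorem lemma2:
  fixes M :: "'a measure" and P :: "'a \<Rightarrow> real" and U :: "real \<Rightarrow> real" and v :: real
  assumes "prob_space M"
    and "P \<in> borel_measurable M"
    and "\<forall>x\<in>space M. 0 \<le> P x \<and> P x \<le> 1"
    and "(\<integral>x. P x \<partial>M) > 0"
    and "v > 0"
    and "mono U"
    and "\<forall>x. U differentiable (at x)"
    and "mono (deriv U) \<or> antimono (deriv U)"
    and "U 0 = 0"
  shows "(concave_on UNIV U \<longrightarrow> dominant M P U v (0, v)) \<and>
         (convex_on UNIV U \<longrightarrow> (\<exists>m \<ge> 0. dominant M P U v (m, 0)))"
proof -
  interpret hybrid_auction M P U v
    using assms(1-6,9) by (intro hybrid_auction.intro hybrid_auction_axioms.intro) simp_all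
  show ?thesis
    using dominant_per_click_bid dominant_per_impression_bid by blast
qed

end
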